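(* Let $s\ge 1$ and let $p\in F_{2,2s}$ be a product of $2s$ real linear forms, with $p\ne\pm\ell^{2s}$ for every real linear form $\ell$. If $(a,b)\in\mathcal B(p)$, then $a\ge s$ and $b\ge s$.
   Context: $F_{2,2s}$ is the real vector space of real binary forms of degree $2s$ in $x,y$. A representation of $p\in F_{2,2s}$ is an expression $p=\sum_{j=1}^r\lambda_j(\alpha_jx+\beta_jy)^{2s}$ with $r\ge 0$ (the empty sum being $0$), $\alpha_j,\beta_j\in\mathbb R$ and $0\ne\lambda_j\in\mathbb R$; it is honest if the linear forms $\alpha_jx+\beta_jy$ are pairwise non-proportional. Its badge is $(a,b)$, where $a$ (resp. $b$) is the number of indices $j$ with $\lambda_j>0$ (resp. $\lambda_j<0$). $\mathcal B(p)$ denotes the set of badges of all honest representations of $p$. *)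

theory Defs
  imports Complex_Main
begin

text \<open>A real binary form in x, y is represented by its polynomial function
  real \<Rightarrow> real \<Rightarrow> real (over the infinite field of reals, equality of forms
  coincides with equality of the induced functions). A linear form
  alpha x + beta y is represented by its coefficient pair (alpha, beta).\<close>

definition proportional :: "real \<times> real \<Rightarrow> real \<times> real \<Rightarrow> bool" where
  "proportional l m \<longleftrightarrow>
     (\<exists>c. fst l = c * fst m \<and> snd l = c * snd m) \<or>
     (\<exists>c. fst m = c * fst l \<and> snd m = c * snd l)"

definition honest_rep ::
  "nat \<Rightarrow> (real \<Rightarrow> real \<Rightarrow> real) \<Rightarrow> nat \<Rightarrow> (nat \<Rightarrow> real) \<Rightarrow> (nat \<Rightarrow> real) \<Rightarrow> (nat \<Rightarrow> real) \<Rightarrow> bool"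
  where
  "honest_rep s p r lam al be \<longleftrightarrow>
     (\<forall>j<r. lam j \<noteq> 0) \<and>
     (\<forall>i<r. \<forall>j<r. i \<noteq> j \<longrightarrow> \<not> proportional (al i, be i) (al j, be j)) \<and>
     (\<forall>x y. p x y = (\<Sum>j<r. lam j * (al j * x + be j * y) ^ (2 * s)))"

definition badges :: "nat \<Rightarrow> (real \<Rightarrow> real \<Rightarrow> real) \<Rightarrow> (nat \<times> nat) set" where
  "badges s p = {(card {j. j < r \<and> lam j > 0}, card {j. j < r \<and> lam j < 0}) | r lam al be.
                   honest_rep s p r lam al be}"

end

theory Submission
  imports Defs "Jordan_Normal_Form.Char_Poly" "HOL-Computational_Algebra.Fundamental_Theorem_Algebra"
    "HOL-Analysis.Derivative"
begin

(* Two facts drive the proof.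
   (1) Directional derivatives preserve "multiple of a product of real linear forms"
       (a homogeneous Gauss-Lucas theorem: the derivative of a real-rooted polynomial is
       real-rooted).
   (2) Differentiating sum_j lam_j l_j^(2s) along w_1, ..., w_{2s-2} gives, up to a positive
       constant, the quadratic form sum_j lam_j l_j(w_1)...l_j(w_{2s-2}) l_j^2.
   By (1) this quadratic form factors over the reals, so it has a non-trivial real zero;
   hence its coefficients cannot all be >= 0 with two independent positive ones.
   Choosing directions in the kernels of selected l_k produces exactly such a sign pattern
   whenever r <= s or fewer than s coefficients are negative.  So b >= s, and a >= s
   follows by applying the same argument to -p. *)

interpretation of_real_poly_hom: map_poly_inj_idom_hom of_real ..

lemma real_rooted_split:
  fixes q :: "real poly"
  assumes real_roots: "\<And>z. poly (map_poly of_real q) z = (0::complex) \<Longrightarrow> Im z = 0"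
  obtains \<rho> where "q = Polynomial.smult (lead_coeff q) (\<Prod>i<degree q. [:- \<rho> i, 1:])"
proof -
  define Q where "Q = (map_poly of_real q :: complex poly)"
  obtain root where Q: "Polynomial.smult (lead_coeff Q) (\<Prod>i<degree Q. [:- root i, 1:]) = Q"
    using complex_poly_decompose' by blast
  show ?thesis
  proof (cases "q = 0")
    case True
    then show ?thesis by (intro that) simp
  next
    case False
    have root_real: "of_real (Re (root i)) = root i" if "i < degree q" for i
    proof -
      have "poly Q (root i) = 0"
        using that by (subst Q[symmetric]) (auto simp: poly_prod Q_def)
      then have "Im (root i) = 0" using real_roots unfolding Q_def by blast
      then show ?thesis by (simp add: complex_eq_iff)
    qed
    have "(\<Prod>i<degree q. [:- of_real (Re (root i)), 1:]) = (\<Prod>i<degree q. [:- root i, 1:])"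
      by (rule prod.cong) (simp_all add: root_real)
    then have "map_poly of_real (Polynomial.smult (lead_coeff q) (\<Prod>i<degree q. [:- Re (root i), 1:])) = Q"
      by (subst Q[symmetric]) (simp add: Q_def of_real_poly_hom.hom_prod of_real_hom.map_poly_hom_smult)
    then have "Polynomial.smult (lead_coeff q) (\<Prod>i<degree q. [:- Re (root i), 1:]) = q"
      unfolding Q_def by (rule of_real_poly_hom.injectivity)
    then show ?thesis by (intro that[of "\<lambda>i. Re (root i)"]) simp
  qed
qed

lemma poly_pderiv_prod_linear:
  fixes z :: "'a::field"
  assumes "finite A" "\<And>i. i \<in> A \<Longrightarrow> z \<noteq> r i"
  shows "poly (pderiv (\<Prod>i\<in>A. [:- r i, 1:])) z
           = poly (\<Prod>i\<in>A. [:- r i, 1:]) z * (\<Sum>i\<in>A. 1 / (z - r i))"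
proof -
  have "poly (pderiv (\<Prod>i\<in>A. [:- r i, 1:])) z = (\<Sum>i\<in>A. \<Prod>k\<in>A - {i}. z - r k)"
    by (simp add: pderiv_prod poly_sum poly_prod pderiv_pCons)
  also have "\<dots> = (\<Sum>i\<in>A. (\<Prod>k\<in>A. z - r k) * (1 / (z - r i)))"
  proof (rule sum.cong[OF refl])
    fix i assume "i \<in> A"
    then have "(\<Prod>k\<in>A. z - r k) = (z - r i) * (\<Prod>k\<in>A - {i}. z - r k)"
      using assms(1) by (simp add: prod.remove)
    then show "(\<Prod>k\<in>A - {i}. z - r k) = (\<Prod>k\<in>A. z - r k) * (1 / (z - r i))"
      using assms(2)[OF \<open>i \<in> A\<close>] by simp
  qed
  finally show ?thesis by (simp add: poly_prod sum_distrib_left)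
qed

(* If Im z <> 0, every 1/(z - rho_i) has imaginary part of sign opposite to Im z,
   hence so does their (non-empty) sum. *)
lemma Im_sum_inverse_sign:
  fixes z :: complex and \<rho> :: "'i \<Rightarrow> real"
  assumes "Im z \<noteq> 0" "finite A" "A \<noteq> {}"
  shows "Im (\<Sum>i\<in>A. 1 / (z - of_real (\<rho> i))) * Im z < 0"
proof -
  have term_neg: "Im (1 / (z - of_real (\<rho> i))) * Im z < 0" for i
  proof -
    have "Im (1 / (z - of_real (\<rho> i))) * Im z = - ((Im z)\<^sup>2 / ((Re z - \<rho> i)\<^sup>2 + (Im z)\<^sup>2))"
      by (simp add: Im_divide power2_eq_square)
    moreover have "0 < (Im z)\<^sup>2 / ((Re z - \<rho> i)\<^sup>2 + (Im z)\<^sup>2)"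
      using assms(1) by (simp add: add_nonneg_pos)
    ultimately show ?thesis by linarith
  qed
  have "Im (\<Sum>i\<in>A. 1 / (z - of_real (\<rho> i))) * Im z = (\<Sum>i\<in>A. Im (1 / (z - of_real (\<rho> i))) * Im z)"
    by (simp add: sum_distrib_right)
  also have "\<dots> < (\<Sum>i\<in>A. 0)"
    using assms(2,3) term_neg by (intro sum_strict_mono) auto
  finally show ?thesis by simp
qed

(* A non-real zero z of
   q' would make q'(z)/q(z) = sum_i 1/(z - rho_i) vanish, contradicting the sign lemma. *)
lemma pderiv_real_rooted:
  fixes \<rho> :: "nat \<Rightarrow> real"
  obtains c' \<rho>' where
    "pderiv (Polynomial.smult c (\<Prod>i<d. [:- \<rho> i, 1:])) = Polynomial.smult c' (\<Prod>i<d - 1. [:- \<rho>' i, 1:])"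
proof -
  define q where "q = Polynomial.smult c (\<Prod>i<d. [:- \<rho> i, 1:])"
  show ?thesis
  proof (cases "pderiv q = 0")
    case True
    then show ?thesis by (intro that[of 0]) (simp add: q_def)
  next
    case False
    then have c: "c \<noteq> 0" and d: "d \<noteq> 0" by (auto simp: q_def)
    have "degree q = d" using c by (simp add: q_def degree_prod_sum_eq)
    then have deg: "degree (pderiv q) = d - 1" by (simp add: degree_pderiv)
    define P where "P = (\<Prod>i<d. [:- of_real (\<rho> i), 1:] :: complex poly)"
    have complexified: "map_poly of_real (pderiv q) = Polynomial.smult (of_real c) (pderiv P)"
      by (simp add: q_def P_def of_real_hom.map_poly_pderiv of_real_hom.map_poly_hom_smult
          of_real_poly_hom.hom_prod pderiv_smult)
    have "Im z = 0" if root: "poly (map_poly of_real (pderiv q)) z = (0::complex)" for z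
    proof (rule ccontr)
      assume Im: "Im z \<noteq> 0"
      then have off: "z \<noteq> of_real (\<rho> i)" for i by auto
      have P_nz: "poly P z \<noteq> 0" using off by (simp add: P_def poly_prod)
      have "Im (\<Sum>i<d. 1 / (z - of_real (\<rho> i))) * Im z < 0"
        using d by (intro Im_sum_inverse_sign[OF Im]) auto
      then have "(\<Sum>i<d. 1 / (z - of_real (\<rho> i))) \<noteq> 0"
        by (metis mult_zero_left order_less_irrefl zero_complex.sel(2))
      with P_nz have "poly (pderiv P) z \<noteq> 0"
        using off unfolding P_def by (subst poly_pderiv_prod_linear) auto
      with root c show False
        by (simp add: complexified)
    qed
    then obtain \<rho>' where "pderiv q = Polynomial.smult (lead_coeff (pderiv q)) (\<Prod>i<d - 1. [:- \<rho>' i, 1:])"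
      using real_rooted_split[of "pderiv q"] deg by metis
    then show ?thesis by (intro that) (simp add: q_def)
  qed
qed

lemma linear_factors_real_roots:
  fixes a b :: "nat \<Rightarrow> real"
  assumes nz: "(\<Prod>i<n. [:a i, b i:]) \<noteq> 0"
    and root: "poly (map_poly of_real (\<Prod>i<n. [:a i, b i:])) z = (0::complex)"
  shows "Im z = 0"
proof -
  have "poly (map_poly of_real (\<Prod>i<n. [:a i, b i:])) z = (\<Prod>i<n. of_real (a i) + z * of_real (b i))"
    by (simp add: of_real_poly_hom.hom_prod of_real_hom.map_poly_pCons_hom poly_prod)
  with root obtain i where i: "i < n" "of_real (a i) + z * of_real (b i) = 0"
    by auto
  have "b i \<noteq> 0"
  proof
    assume "b i = 0"
    with i have "[:a i, b i:] = 0" by simp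
    with i(1) have "(\<Prod>i<n. [:a i, b i:]) = 0" by (auto intro: prod_zero)
    with nz show False by contradiction
  qed
  moreover have "z * of_real (b i) = - of_real (a i)"
    using i(2) by (simp add: add_eq_0_iff add.commute)
  ultimately have "z = of_real (- a i / b i)"
    by (simp add: field_simps)
  then show ?thesis by simp
qed

lemma pderiv_linear_factors:
  fixes a b :: "nat \<Rightarrow> real"
  obtains c d \<rho> where "d \<le> n - 1"
    and "pderiv (\<Prod>i<n. [:a i, b i:]) = Polynomial.smult c (\<Prod>k<d. [:- \<rho> k, 1:])"
proof -
  define g where "g = (\<Prod>i<n. [:a i, b i:])"
  show ?thesis
  proof (cases "g = 0")
    case True
    then show ?thesis by (intro that[of 0 0]) (simp_all add: True[unfolded g_def])
  next
    case False
    have "Im z = 0" if "poly (map_poly of_real g) z = (0::complex)" for z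
      using linear_factors_real_roots False that unfolding g_def by blast
    then obtain \<rho> where g: "g = Polynomial.smult (lead_coeff g) (\<Prod>k<degree g. [:- \<rho> k, 1:])"
      by (rule real_rooted_split)
    obtain c \<rho>' where "pderiv g = Polynomial.smult c (\<Prod>k<degree g - 1. [:- \<rho>' k, 1:])"
      using pderiv_real_rooted[where c = "lead_coeff g" and d = "degree g" and \<rho> = \<rho>, folded g] by metis
    moreover have "degree g \<le> n"
    proof -
      have "degree g \<le> (\<Sum>i<n. degree [:a i, b i:])"
        using degree_prod_sum_le[of "{..<n}" "\<lambda>i. [:a i, b i:]"] unfolding g_def by (simp add: o_def)
      also have "\<dots> \<le> (\<Sum>i<n. 1)"
        by (intro sum_mono) simp
      finally show ?thesis by simp
    qed
    ultimately show ?thesis using that unfolding g_def by (meson diff_le_mono)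
  qed
qed

lemma continuous_agree_off_point:
  fixes f g :: "'a::{perfect_space,t2_space} \<Rightarrow> 'b::t2_space"
  assumes "isCont f x0" "isCont g x0" "\<And>x. x \<noteq> x0 \<Longrightarrow> f x = g x"
  shows "f x0 = g x0"
proof -
  have "eventually (\<lambda>x. g x = f x) (at x0)"
    using assms(3) by (auto simp: eventually_at_filter)
  then have "(f \<longlongrightarrow> g x0) (at x0)"
    by (rule Lim_transform_eventually[OF isContD[OF assms(2)]])
  with isContD[OF assms(1)] show ?thesis
    by (rule tendsto_unique[OF at_neq_bot])
qed

definition lin_prod :: "nat \<Rightarrow> (real \<Rightarrow> real \<Rightarrow> real) \<Rightarrow> bool" where
  "lin_prod n F \<longleftrightarrow> (\<exists>c u v. \<forall>x y. F x y = c * (\<Prod>i<n. u i * x + v i * y))"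

lemma lin_prod_intro:
  assumes "\<And>x y. F x y = c * (\<Prod>k<d. u k * x + v k * y) * (\<alpha> * x + \<beta> * y) ^ e"
  shows "lin_prod (d + e) F"
proof -
  define u' where "u' k = (if k < d then u k else \<alpha>)" for k
  define v' where "v' k = (if k < d then v k else \<beta>)" for k
  have "(\<Prod>k<d + e. u' k * x + v' k * y) = (\<Prod>k<d. u k * x + v k * y) * (\<alpha> * x + \<beta> * y) ^ e" for x y
  proof -
    have "(\<Prod>k<d + e. u' k * x + v' k * y)
        = (\<Prod>k<d. u' k * x + v' k * y) * (\<Prod>k\<in>{d..<d + e}. u' k * x + v' k * y)"
      by (simp add: lessThan_atLeast0 prod.atLeastLessThan_concat)
    also have "(\<Prod>k<d. u' k * x + v' k * y) = (\<Prod>k<d. u k * x + v k * y)"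
      by (intro prod.cong) (auto simp: u'_def v'_def)
    also have "(\<Prod>k\<in>{d..<d + e}. u' k * x + v' k * y) = (\<Prod>k\<in>{d..<d + e}. \<alpha> * x + \<beta> * y)"
      by (intro prod.cong) (auto simp: u'_def v'_def)
    finally show ?thesis by simp
  qed
  then show ?thesis
    unfolding lin_prod_def using assms by (intro exI[of _ c] exI[of _ u'] exI[of _ v']) (simp add: mult.assoc)
qed

lemma lin_prod_linear_substitution:
  assumes "lin_prod n G"
  shows "lin_prod n (\<lambda>x y. c * G (p1 * x + q1 * y) (p2 * x + q2 * y))"
proof -
  obtain c0 u v where G: "\<And>s t. G s t = c0 * (\<Prod>i<n. u i * s + v i * t)"
    using assms unfolding lin_prod_def by blast
  have "u i * (p1 * x + q1 * y) + v i * (p2 * x + q2 * y) = (u i * p1 + v i * p2) * x + (u i * q1 + v i * q2) * y"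
    for i x y by (simp add: algebra_simps)
  then show ?thesis
    unfolding lin_prod_def G
    by (intro exI[of _ "c * c0"] exI[of _ "\<lambda>i. u i * p1 + v i * p2"] exI[of _ "\<lambda>i. u i * q1 + v i * q2"])
      (simp add: mult.assoc)
qed

lemma homogenized_pderiv_prod:
  fixes a b :: "nat \<Rightarrow> real"
  assumes "A \<noteq> 0"
  shows "(\<Sum>i<n. b i * (\<Prod>k\<in>{..<n} - {i}. A * a k + B * b k))
           = A ^ (n - 1) * poly (pderiv (\<Prod>i<n. [:a i, b i:])) (B / A)"
proof -
  have factor: "(\<Prod>k\<in>{..<n} - {i}. A * a k + B * b k) = A ^ (n - 1) * (\<Prod>k\<in>{..<n} - {i}. a k + B / A * b k)"
    if "i \<in> {..<n}" for i
  proof -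
    have card: "card ({..<n} - {i}) = n - 1" using that by simp
    have "(\<Prod>k\<in>{..<n} - {i}. A * a k + B * b k) = (\<Prod>k\<in>{..<n} - {i}. A * (a k + B / A * b k))"
      using assms by (intro prod.cong) (simp_all add: field_simps)
    also have "\<dots> = A ^ (n - 1) * (\<Prod>k\<in>{..<n} - {i}. a k + B / A * b k)"
      by (simp add: prod.distrib card)
    finally show ?thesis .
  qed
  have "(\<Sum>i<n. b i * (\<Prod>k\<in>{..<n} - {i}. A * a k + B * b k))
      = (\<Sum>i<n. b i * (A ^ (n - 1) * (\<Prod>k\<in>{..<n} - {i}. a k + B / A * b k)))"
    by (intro sum.cong refl) (simp add: factor)
  also have "\<dots> = A ^ (n - 1) * poly (pderiv (\<Prod>i<n. [:a i, b i:])) (B / A)"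
    by (simp add: pderiv_prod poly_sum poly_prod pderiv_pCons sum_distrib_left mult_ac)
  finally show ?thesis .
qed

(* For A <> 0 this follows from the
   univariate statement by dehomogenizing; the case A = 0 follows by continuity. *)
lemma homogeneous_deriv_lin_prod:
  fixes a b :: "nat \<Rightarrow> real"
  shows "lin_prod (n - 1) (\<lambda>A B. \<Sum>i<n. b i * (\<Prod>k\<in>{..<n} - {i}. A * a k + B * b k))"
proof -
  obtain c d \<rho> where d: "d \<le> n - 1"
    and g': "pderiv (\<Prod>i<n. [:a i, b i:]) = Polynomial.smult c (\<Prod>k<d. [:- \<rho> k, 1:])"
    using pderiv_linear_factors by metis
  define L where "L A B = (\<Sum>i<n. b i * (\<Prod>k\<in>{..<n} - {i}. A * a k + B * b k))" for A B
  define R where "R A B = c * (\<Prod>k<d. (- \<rho> k) * A + 1 * B) * (1 * A + 0 * B) ^ (n - 1 - d)" for A B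
  have off_axis: "L A B = R A B" if "A \<noteq> 0" for A B
  proof -
    have "L A B = A ^ (n - 1) * poly (pderiv (\<Prod>i<n. [:a i, b i:])) (B / A)"
      unfolding L_def using that by (rule homogenized_pderiv_prod)
    also have "\<dots> = c * A ^ (n - 1 - d) * (A ^ d * (\<Prod>k<d. B / A - \<rho> k))"
    proof -
      have "n - 1 = (n - 1 - d) + d"
        using d by simp
      then have "A ^ (n - 1) = A ^ (n - 1 - d) * A ^ d"
        by (metis power_add)
      then show ?thesis by (simp add: g' poly_prod mult_ac)
    qed
    also have "A ^ d * (\<Prod>k<d. B / A - \<rho> k) = (\<Prod>k<d. (- \<rho> k) * A + 1 * B)"
    proof -
      have "(\<Prod>k<d. (- \<rho> k) * A + 1 * B) = (\<Prod>k<d. A * (B / A - \<rho> k))"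
        using that by (intro prod.cong) (simp_all add: field_simps)
      then show ?thesis by (simp add: prod.distrib)
    qed
    finally show ?thesis unfolding R_def by (simp add: mult_ac)
  qed
  have "L A B = R A B" for A B
  proof (cases "A = 0")
    case True
    have "L 0 B = R 0 B"
    proof (rule continuous_agree_off_point[where f = "\<lambda>A. L A B" and g = "\<lambda>A. R A B"])
      show "isCont (\<lambda>A. L A B) 0" unfolding L_def by (intro continuous_intros)
      show "isCont (\<lambda>A. R A B) 0" unfolding R_def by (intro continuous_intros)
      show "L A' B = R A' B" if "A' \<noteq> 0" for A'
        using that by (rule off_axis)
    qed
    with True show ?thesis by simp
  next
    case False
    then show ?thesis by (rule off_axis)
  qed
  then have "lin_prod (d + (n - 1 - d)) L"
    unfolding R_def by (rule lin_prod_intro)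
  moreover have "d + (n - 1 - d) = n - 1" using d by arith
  ultimately show ?thesis unfolding L_def by simp
qed

definition dir_deriv :: "real \<times> real \<Rightarrow> (real \<Rightarrow> real \<Rightarrow> real) \<Rightarrow> real \<Rightarrow> real \<Rightarrow> real" where
  "dir_deriv w F x y = deriv (\<lambda>t. F (x + t * fst w) (y + t * snd w)) 0"

lemma dir_deriv_eqI:
  assumes "((\<lambda>t. F (x + t * fst w) (y + t * snd w)) has_field_derivative D) (at 0)"
  shows "dir_deriv w F x y = D"
  using assms unfolding dir_deriv_def by (rule DERIV_imp_deriv)

lemma dir_deriv_lin_prod_formula:
  assumes "\<And>x y. F x y = c * (\<Prod>i<n. u i * x + v i * y)"
  shows "dir_deriv w F x y
           = c * (\<Sum>i<n. (u i * fst w + v i * snd w) * (\<Prod>k\<in>{..<n} - {i}. u k * x + v k * y))"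
proof (rule dir_deriv_eqI)
  have "((\<lambda>t. \<Prod>i<n. (u i * x + v i * y) + t * (u i * fst w + v i * snd w)) has_field_derivative
      (\<Sum>i<n. (u i * fst w + v i * snd w)
         * (\<Prod>k\<in>{..<n} - {i}. (u k * x + v k * y) + 0 * (u k * fst w + v k * snd w)))) (at 0)"
    by (rule has_field_derivative_prod) (auto intro!: derivative_eq_intros)
  then show "((\<lambda>t. F (x + t * fst w) (y + t * snd w)) has_field_derivative
      c * (\<Sum>i<n. (u i * fst w + v i * snd w) * (\<Prod>k\<in>{..<n} - {i}. u k * x + v k * y))) (at 0)"
  proof -
    have "u i * (x + t * fst w) + v i * (y + t * snd w) = (u i * x + v i * y) + t * (u i * fst w + v i * snd w)"
      for i t by (simp add: algebra_simps)
    then have "(\<lambda>t. F (x + t * fst w) (y + t * snd w))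
        = (\<lambda>t. c * (\<Prod>i<n. (u i * x + v i * y) + t * (u i * fst w + v i * snd w)))"
      by (simp add: assms)
    with \<open>(_ has_field_derivative _) _\<close> show ?thesis by (auto intro: DERIV_cmult)
  qed
qed

(* In coordinates (A, B) with respect to the basis (-w2, w1), (w1, w2), each form is
   A a_k + B b_k, and differentiating along w is differentiating in B. *)
lemma lin_prod_dir_deriv:
  assumes "lin_prod n F"
  shows "lin_prod (n - 1) (dir_deriv w F)"
proof -
  obtain c u v where F: "\<And>x y. F x y = c * (\<Prod>i<n. u i * x + v i * y)"
    using assms unfolding lin_prod_def by blast
  define w1 w2 where "w1 = fst w" and "w2 = snd w"
  define a where "a i = u i * (- w2) + v i * w1" for i
  define b where "b i = u i * w1 + v i * w2" for i
  have D: "dir_deriv w F x y = c * (\<Sum>i<n. b i * (\<Prod>k\<in>{..<n} - {i}. u k * x + v k * y))" for x y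
    unfolding b_def w1_def w2_def by (rule dir_deriv_lin_prod_formula[OF F])
  show ?thesis
  proof (cases "w1 = 0 \<and> w2 = 0")
    case True
    then have "dir_deriv w F x y = 0 * (\<Prod>k<0. 0 * x + 0 * y) * (0 * x + 0 * y) ^ (n - 1)" for x y
      by (simp add: D b_def)
    then have "lin_prod (0 + (n - 1)) (dir_deriv w F)"
      by (rule lin_prod_intro)
    then show ?thesis by simp
  next
    case False
    define N where "N = w1\<^sup>2 + w2\<^sup>2"
    have N: "N \<noteq> 0" using False unfolding N_def by (simp add: sum_power2_eq_zero_iff)
    define A where "A x y = (- w2 / N) * x + (w1 / N) * y" for x y
    define B where "B x y = (w1 / N) * x + (w2 / N) * y" for x y
    have coords: "u k * x + v k * y = A x y * a k + B x y * b k" for k x y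
    proof -
      have "(- w2 * x + w1 * y) * a k + (w1 * x + w2 * y) * b k = N * (u k * x + v k * y)"
        unfolding a_def b_def N_def by (simp add: algebra_simps power2_eq_square)
      moreover have "A x y * a k + B x y * b k = ((- w2 * x + w1 * y) * a k + (w1 * x + w2 * y) * b k) / N"
        unfolding A_def B_def using N by (simp add: field_simps)
      ultimately show ?thesis using N by simp
    qed
    have "dir_deriv w F x y = c * (\<Sum>i<n. b i * (\<Prod>k\<in>{..<n} - {i}. A x y * a k + B x y * b k))" for x y
      unfolding D coords ..
    then have "dir_deriv w F = (\<lambda>x y. c * (\<Sum>i<n. b i * (\<Prod>k\<in>{..<n} - {i}. A x y * a k + B x y * b k)))"
      by (intro ext)
    moreover have "lin_prod (n - 1) (\<lambda>x y. c * (\<lambda>A B. \<Sum>i<n. b i * (\<Prod>k\<in>{..<n} - {i}. A * a k + B * b k))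
        ((- w2 / N) * x + (w1 / N) * y) ((w1 / N) * x + (w2 / N) * y))"
      by (rule lin_prod_linear_substitution[OF homogeneous_deriv_lin_prod])
    ultimately show ?thesis
      unfolding A_def B_def by simp
  qed
qed

definition dir_derivs :: "(real \<times> real) list \<Rightarrow> (real \<Rightarrow> real \<Rightarrow> real) \<Rightarrow> real \<Rightarrow> real \<Rightarrow> real" where
  "dir_derivs ws F = foldr dir_deriv ws F"

lemma lin_prod_dir_derivs:
  assumes "lin_prod n F"
  shows "lin_prod (n - length ws) (dir_derivs ws F)"
proof (induction ws)
  case Nil
  then show ?case using assms by (simp add: dir_derivs_def)
next
  case (Cons w ws)
  then have "lin_prod (n - length ws - 1) (dir_deriv w (dir_derivs ws F))"
    by (rule lin_prod_dir_deriv)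
  then show ?case by (simp add: dir_derivs_def)
qed

lemma dir_deriv_power_sum:
  assumes "\<And>x y. F x y = (\<Sum>j<r. \<mu> j * (a j * x + b j * y) ^ M)"
  shows "dir_deriv w F x y
           = (\<Sum>j<r. (real M * (a j * fst w + b j * snd w) * \<mu> j) * (a j * x + b j * y) ^ (M - 1))"
proof (rule dir_deriv_eqI)
  have lin: "((\<lambda>t. a j * (x + t * fst w) + b j * (y + t * snd w)) has_field_derivative
      a j * fst w + b j * snd w) (at 0)" for j
    by (auto intro!: derivative_eq_intros)
  have "((\<lambda>t. \<Sum>j<r. \<mu> j * (a j * (x + t * fst w) + b j * (y + t * snd w)) ^ M) has_field_derivative
      (\<Sum>j<r. \<mu> j * (of_nat M * ((a j * fst w + b j * snd w)
                * (a j * (x + 0 * fst w) + b j * (y + 0 * snd w)) ^ (M - Suc 0))))) (at 0)"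
    by (intro DERIV_sum DERIV_cmult DERIV_power lin)
  then show "((\<lambda>t. F (x + t * fst w) (y + t * snd w)) has_field_derivative
      (\<Sum>j<r. (real M * (a j * fst w + b j * snd w) * \<mu> j) * (a j * x + b j * y) ^ (M - 1))) (at 0)"
    unfolding assms by (simp add: mult_ac)
qed

lemma dir_derivs_power_sum:
  assumes F: "\<And>x y. F x y = (\<Sum>j<r. \<mu> j * (a j * x + b j * y) ^ M)"
    and "length ws \<le> M"
  obtains C where "C > 0" and "\<And>x y. dir_derivs ws F x y
      = (\<Sum>j<r. (C * \<mu> j * (\<Prod>w\<leftarrow>ws. a j * fst w + b j * snd w)) * (a j * x + b j * y) ^ (M - length ws))"
proof -
  have "\<exists>C>0. \<forall>x y. dir_derivs ws F x y
      = (\<Sum>j<r. (C * \<mu> j * (\<Prod>w\<leftarrow>ws. a j * fst w + b j * snd w)) * (a j * x + b j * y) ^ (M - length ws))"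
    using assms(2)
  proof (induction ws)
    case Nil
    then show ?case using F by (intro exI[of _ 1]) (simp add: dir_derivs_def)
  next
    case (Cons w ws)
    then obtain C where C: "C > 0" and IH: "\<And>x y. dir_derivs ws F x y
        = (\<Sum>j<r. (C * \<mu> j * (\<Prod>w\<leftarrow>ws. a j * fst w + b j * snd w)) * (a j * x + b j * y) ^ (M - length ws))"
      by auto
    define C' where "C' = real (M - length ws) * C"
    have "C' > 0" using C Cons.prems unfolding C'_def by simp
    moreover have "dir_derivs (w # ws) F x y
        = (\<Sum>j<r. (C' * \<mu> j * (\<Prod>w\<leftarrow>w # ws. a j * fst w + b j * snd w)) * (a j * x + b j * y) ^ (M - length (w # ws)))"
      for x y
    proof -
      have "dir_derivs (w # ws) F x y = dir_deriv w (dir_derivs ws F) x y"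
        by (simp add: dir_derivs_def)
      also have "\<dots> = (\<Sum>j<r. (real (M - length ws) * (a j * fst w + b j * snd w)
            * (C * \<mu> j * (\<Prod>w\<leftarrow>ws. a j * fst w + b j * snd w))) * (a j * x + b j * y) ^ (M - length ws - 1))"
        by (rule dir_deriv_power_sum[OF IH])
      also have "\<dots> = (\<Sum>j<r. (C' * \<mu> j * (\<Prod>w\<leftarrow>w # ws. a j * fst w + b j * snd w))
            * (a j * x + b j * y) ^ (M - length (w # ws)))"
        by (intro sum.cong refl) (simp add: C'_def mult_ac)
      finally show ?thesis .
    qed
    ultimately show ?case by blast
  qed
  then show ?thesis using that by blast
qed

lemma lin_prod_nontrivial_zero:
  assumes "lin_prod n F" "1 \<le> n"
  obtains x y where "x \<noteq> 0 \<or> y \<noteq> 0" and "F x y = 0"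
proof -
  obtain c u v where F: "\<And>x y. F x y = c * (\<Prod>i<n. u i * x + v i * y)"
    using assms(1) unfolding lin_prod_def by blast
  obtain x y where xy: "x \<noteq> 0 \<or> y \<noteq> 0" "u 0 * x + v 0 * y = 0"
  proof (cases "u 0 = 0 \<and> v 0 = 0")
    case True
    then show ?thesis using that[of 1 0] by simp
  next
    case False
    then show ?thesis using that[of "v 0" "- u 0"] by (auto simp: algebra_simps)
  qed
  have "(\<Prod>i<n. u i * x + v i * y) = 0"
    using assms(2) xy(2) by (intro prod_zero) auto
  then have "F x y = 0"
    unfolding F by simp
  with xy(1) show ?thesis by (rule that)
qed

lemma sum_squares_pos:
  fixes \<kappa> a b :: "nat \<Rightarrow> real"
  assumes "\<forall>j<r. 0 \<le> \<kappa> j" "j1 < r" "j2 < r" "0 < \<kappa> j1" "0 < \<kappa> j2"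
    and "a j1 * b j2 - b j1 * a j2 \<noteq> 0" and "x \<noteq> 0 \<or> y \<noteq> 0"
  shows "0 < (\<Sum>j<r. \<kappa> j * (a j * x + b j * y)\<^sup>2)"
proof -
  have "a j1 * x + b j1 * y \<noteq> 0 \<or> a j2 * x + b j2 * y \<noteq> 0"
  proof (rule ccontr)
    assume "\<not> ?thesis"
    then have l1: "a j1 * x + b j1 * y = 0" and l2: "a j2 * x + b j2 * y = 0" by auto
    have "x * (a j1 * b j2 - b j1 * a j2) = b j2 * (a j1 * x + b j1 * y) - b j1 * (a j2 * x + b j2 * y)"
      and "y * (a j1 * b j2 - b j1 * a j2) = a j1 * (a j2 * x + b j2 * y) - a j2 * (a j1 * x + b j1 * y)"
      by (simp_all add: algebra_simps)
    with l1 l2 assms(6,7) show False by simp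
  qed
  then obtain j where j: "j < r" "0 < \<kappa> j * (a j * x + b j * y)\<^sup>2"
    using assms(2-5) by (metis mult_pos_pos zero_less_power2)
  have "\<kappa> j * (a j * x + b j * y)\<^sup>2 \<le> (\<Sum>j<r. \<kappa> j * (a j * x + b j * y)\<^sup>2)"
    using j(1) assms(1) by (intro member_le_sum) auto
  with j(2) show ?thesis by linarith
qed

(* The coefficient of l_j^2 left after differentiating sum_j lam_j l_j^(2s) along ws
   (up to a positive constant common to all j). *)
definition weight ::
  "(nat \<Rightarrow> real) \<Rightarrow> (nat \<Rightarrow> real) \<Rightarrow> (nat \<Rightarrow> real) \<Rightarrow> (real \<times> real) list \<Rightarrow> nat \<Rightarrow> real" where
  "weight lam al be ws j = lam j * (\<Prod>w\<leftarrow>ws. al j * fst w + be j * snd w)"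

(* If p is a product of 2s real linear forms and
   p = sum_j lam_j l_j^(2s), then no choice of 2s - 2 directions makes all weights
   non-negative with two independent positive ones: the resulting binary quadratic
   form would be positive definite, yet it is a product of two real linear forms. *)
lemma no_definite_weights:
  assumes s: "1 \<le> s" and p: "lin_prod (2 * s) p"
    and rep: "\<And>x y. p x y = (\<Sum>j<r. lam j * (al j * x + be j * y) ^ (2 * s))"
    and len: "length ws = 2 * s - 2"
    and nonneg: "\<forall>j<r. 0 \<le> weight lam al be ws j"
    and j: "j1 < r" "j2 < r" "0 < weight lam al be ws j1" "0 < weight lam al be ws j2"
    and indep: "al j1 * be j2 - be j1 * al j2 \<noteq> 0"
  shows False
proof -
  have two: "2 * s - length ws = 2" using len s by simp
  obtain C where C: "C > 0" and Q: "\<And>x y. dir_derivs ws p x y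
      = (\<Sum>j<r. (C * lam j * (\<Prod>w\<leftarrow>ws. al j * fst w + be j * snd w)) * (al j * x + be j * y) ^ (2 * s - length ws))"
    by (rule dir_derivs_power_sum[where ws = ws, OF rep]) (simp add: len, blast)
  have "lin_prod 2 (dir_derivs ws p)"
    using lin_prod_dir_derivs[OF p, of ws] two by simp
  then obtain x y where xy: "x \<noteq> 0 \<or> y \<noteq> 0" "dir_derivs ws p x y = 0"
    by (rule lin_prod_nontrivial_zero) simp
  have "0 < (\<Sum>j<r. (C * weight lam al be ws j) * (al j * x + be j * y)\<^sup>2)"
    by (rule sum_squares_pos[OF _ j(1,2)]) (use nonneg j indep xy C in auto)
  also have "\<dots> = dir_derivs ws p x y"
    by (simp add: Q two weight_def mult.assoc)
  finally show False using xy(2) by simp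
qed

lemma not_proportional_det:
  assumes "\<not> proportional l m"
  shows "fst l * snd m - snd l * fst m \<noteq> 0"
proof
  assume det: "fst l * snd m - snd l * fst m = 0"
  have "proportional l m"
  proof (cases "fst m \<noteq> 0 \<or> snd m \<noteq> 0")
    case True
    define c where "c = (if fst m \<noteq> 0 then fst l / fst m else snd l / snd m)"
    have "fst l = c * fst m \<and> snd l = c * snd m"
      using True det unfolding c_def by (auto simp: field_simps)
    then show ?thesis unfolding proportional_def by blast
  next
    case False
    then have "fst m = 0 * fst l \<and> snd m = 0 * snd l" by simp
    then show ?thesis unfolding proportional_def by blast
  qed
  with assms show False by contradiction
qed

lemma honest_rep_det:
  assumes "honest_rep s p r lam al be" "i < r" "j < r" "i \<noteq> j"
  shows "al i * be j - be i * al j \<noteq> 0"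
  using assms not_proportional_det[of "(al i, be i)" "(al j, be j)"] unfolding honest_rep_def by auto

lemma solve_two_linear:
  fixes a1 b1 a2 b2 t1 t2 :: real
  assumes "a1 * b2 - b1 * a2 \<noteq> 0"
  obtains w where "a1 * fst w + b1 * snd w = t1" and "a2 * fst w + b2 * snd w = t2"
proof
  define D where "D = a1 * b2 - b1 * a2"
  have D: "D \<noteq> 0" using assms unfolding D_def .
  define w where "w = ((t1 * b2 - b1 * t2) / D, (a1 * t2 - t1 * a2) / D)"
  have "a1 * fst w + b1 * snd w = (a1 * (t1 * b2 - b1 * t2) + b1 * (a1 * t2 - t1 * a2)) / D"
    unfolding w_def by (simp add: add_divide_distrib)
  also have "a1 * (t1 * b2 - b1 * t2) + b1 * (a1 * t2 - t1 * a2) = t1 * D"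
    unfolding D_def by (simp add: algebra_simps)
  finally show "a1 * fst w + b1 * snd w = t1" using D by simp
  have "a2 * fst w + b2 * snd w = (a2 * (t1 * b2 - b1 * t2) + b2 * (a1 * t2 - t1 * a2)) / D"
    unfolding w_def by (simp add: add_divide_distrib)
  also have "a2 * (t1 * b2 - b1 * t2) + b2 * (a1 * t2 - t1 * a2) = t2 * D"
    unfolding D_def by (simp add: algebra_simps)
  finally show "a2 * fst w + b2 * snd w = t2" using D by simp
qed

lemma common_nonroot:
  fixes al be :: "nat \<Rightarrow> real"
  assumes "\<And>j. j < r \<Longrightarrow> al j \<noteq> 0 \<or> be j \<noteq> 0"
  shows "\<exists>z. \<forall>j<r. al j * fst z + be j * snd z \<noteq> 0"
proof -
  have "finite ((\<lambda>j. - al j / be j) ` {..<r})" by simp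
  then obtain t where t: "t \<notin> (\<lambda>j. - al j / be j) ` {..<r}"
    using ex_new_if_finite[OF infinite_UNIV_char_0] by blast
  have "al j * fst (1, t) + be j * snd (1, t) \<noteq> 0" if "j < r" for j
  proof
    assume h: "al j * fst (1, t) + be j * snd (1, t) = 0"
    show False
    proof (cases "be j = 0")
      case True
      with h assms[OF that] show False by simp
    next
      case False
      with h have "t = - al j / be j" by (simp add: field_simps)
      with t that show False by auto
    qed
  qed
  then show ?thesis by blast
qed

lemma honest_rep_nonzero_form:
  assumes hon: "honest_rep s p r lam al be" and "2 \<le> r" "j < r"
  shows "al j \<noteq> 0 \<or> be j \<noteq> 0"
proof -
  define k where "k = (if j = 0 then 1 else 0 :: nat)"
  have "k < r" "j \<noteq> k" using assms(2,3) unfolding k_def by auto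
  with hon \<open>j < r\<close> have "al j * be k - be j * al k \<noteq> 0" by (rule honest_rep_det)
  then show ?thesis by auto
qed

definition kernel_dir :: "real \<Rightarrow> real \<Rightarrow> real \<times> real" where
  "kernel_dir a b = (b, - a)"

lemma kernel_dir_eval: "a' * fst (kernel_dir a b) + b' * snd (kernel_dir a b) = a' * b - b' * a"
  by (simp add: kernel_dir_def)

lemma two_positive_indices:
  fixes lam :: "nat \<Rightarrow> real"
  assumes lam: "\<forall>j<r. lam j \<noteq> 0" and many: "card {j. j < r \<and> lam j < 0} + 2 \<le> r"
  obtains j1 j2 where "j1 < r" "j2 < r" "j1 \<noteq> j2" "0 < lam j1" "0 < lam j2"
proof -
  define P where "P = {j. j < r \<and> 0 < lam j}"
  have "{..<r} = P \<union> {j. j < r \<and> lam j < 0}"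
    unfolding P_def using lam by (auto simp: neq_iff)
  moreover have "P \<inter> {j. j < r \<and> lam j < 0} = {}"
    unfolding P_def by auto
  ultimately have "r = card P + card {j. j < r \<and> lam j < 0}"
    by (metis card_Un_disjoint card_lessThan finite_Un finite_lessThan)
  then have card_P: "2 \<le> card P" using many by linarith
  then obtain j1 where j1: "j1 \<in> P"
    by (metis card.empty ex_in_conv not_numeral_le_zero)
  have "0 < card (P - {j1})" using card_P j1 by (simp add: card_Diff_singleton_if)
  then obtain j2 where j2: "j2 \<in> P - {j1}"
    by (metis card.empty ex_in_conv less_irrefl)
  show ?thesis
    using j1 j2 unfolding P_def by (intro that[of j1 j2]) auto
qed

(* An honest representation with 2 <= r <= s terms is impossible: differentiate once
   along the kernel of each l_k for k >= 2 (killing those terms), once along a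
   direction making both surviving weights squares, and 2s - r - 1 times along a
   direction where l_0 = l_1 = 1. *)
lemma short_honest_rep_impossible:
  assumes s: "1 \<le> s" and p: "lin_prod (2 * s) p" and hon: "honest_rep s p r lam al be"
    and r: "2 \<le> r" "r \<le> s"
  shows False
proof -
  have lam: "\<forall>j<r. lam j \<noteq> 0"
    and rep: "\<And>x y. p x y = (\<Sum>j<r. lam j * (al j * x + be j * y) ^ (2 * s))"
    using hon unfolding honest_rep_def by auto
  define det where "det j k = al j * be k - be j * al k" for j k
  have det_nz: "det j k \<noteq> 0" if "j < r" "k < r" "j \<noteq> k" for j k
    unfolding det_def by (rule honest_rep_det[OF hon that])
  define X where "X j = (\<Prod>k\<leftarrow>[2..<r]. det j k)" for j
  have X01: "X 0 \<noteq> 0" "X 1 \<noteq> 0"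
    unfolding X_def using det_nz by (auto simp: prod_list_zero_iff)
  have X_other: "X j = 0" if "2 \<le> j" "j < r" for j
    unfolding X_def det_def using that by (auto simp: prod_list_zero_iff intro!: rev_image_eqI[of j])
  have det01: "al 0 * be 1 - be 0 * al 1 \<noteq> 0"
    using det_nz[of 0 1] r unfolding det_def by simp
  obtain w1 where w1: "al 0 * fst w1 + be 0 * snd w1 = lam 0 * X 0" "al 1 * fst w1 + be 1 * snd w1 = lam 1 * X 1"
    by (rule solve_two_linear[OF det01])
  obtain w' where w': "al 0 * fst w' + be 0 * snd w' = 1" "al 1 * fst w' + be 1 * snd w' = 1"
    by (rule solve_two_linear[OF det01])
  define m where "m = 2 * s - r - 1"
  define ws where "ws = map (\<lambda>k. kernel_dir (al k) (be k)) [2..<r] @ w1 # replicate m w'"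
  have len: "length ws = 2 * s - 2"
    unfolding ws_def m_def using r s by simp
  have wt: "weight lam al be ws j
      = lam j * X j * (al j * fst w1 + be j * snd w1) * (al j * fst w' + be j * snd w') ^ m" for j
    unfolding weight_def ws_def X_def det_def by (simp add: kernel_dir_eval o_def mult.assoc)
  have "weight lam al be ws 0 = (lam 0 * X 0)\<^sup>2" "weight lam al be ws 1 = (lam 1 * X 1)\<^sup>2"
    unfolding wt w1 w' by (simp_all add: power2_eq_square)
  then have pos: "0 < weight lam al be ws 0" "0 < weight lam al be ws 1"
    using X01 lam r by simp_all
  have "0 \<le> weight lam al be ws j" if "j < r" for j
  proof (cases "j < 2")
    case True
    then have "j = 0 \<or> j = 1" by auto
    with pos show ?thesis by auto
  next
    case False
    with X_other that show ?thesis by (simp add: wt)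
  qed
  then show False
    using no_definite_weights[OF s p rep len _ _ _ pos det01] r by simp
qed

(* If r > s and fewer than s coefficients are negative: differentiate twice along the
   kernel of each negative l_k and along a direction where no l_j vanishes for the
   remaining even number of steps.  Negative terms get weight 0, positive terms get
   positive weight, and there are at least two positive terms. *)
lemma few_negatives_impossible:
  assumes s: "1 \<le> s" and p: "lin_prod (2 * s) p" and hon: "honest_rep s p r lam al be"
    and r: "s < r" and few: "card {j. j < r \<and> lam j < 0} < s"
  shows False
proof -
  have lam: "\<forall>j<r. lam j \<noteq> 0"
    and rep: "\<And>x y. p x y = (\<Sum>j<r. lam j * (al j * x + be j * y) ^ (2 * s))"
    using hon unfolding honest_rep_def by auto
  define det where "det j k = al j * be k - be j * al k" for j k
  have det_nz: "det j k \<noteq> 0" if "j < r" "k < r" "j \<noteq> k" for j k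
    unfolding det_def by (rule honest_rep_det[OF hon that])
  define Neg where "Neg = filter (\<lambda>k. lam k < 0) [0..<r]"
  have set_Neg: "set Neg = {j. j < r \<and> lam j < 0}"
    unfolding Neg_def by auto
  have len_Neg: "length Neg = card {j. j < r \<and> lam j < 0}"
    using distinct_card[of Neg] set_Neg unfolding Neg_def by simp
  have "al j \<noteq> 0 \<or> be j \<noteq> 0" if "j < r" for j
    using hon _ that by (rule honest_rep_nonzero_form) (use r s in linarith)
  then obtain z where z: "\<forall>j<r. al j * fst z + be j * snd z \<noteq> 0"
    using common_nonroot[of r al be] by blast
  define Y where "Y j = (\<Prod>k\<leftarrow>Neg. det j k)" for j
  define m where "m = s - 1 - length Neg"
  define ws where "ws = map (\<lambda>k. kernel_dir (al k) (be k)) Neg @ map (\<lambda>k. kernel_dir (al k) (be k)) Neg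
    @ replicate (2 * m) z"
  have len: "length ws = 2 * s - 2"
    unfolding ws_def m_def using few len_Neg by simp
  have "(\<Prod>w\<leftarrow>ws. al j * fst w + be j * snd w) = Y j * Y j * (al j * fst z + be j * snd z) ^ (2 * m)" for j
    unfolding ws_def Y_def det_def by (simp add: kernel_dir_eval o_def prod_list_replicate mult.assoc)
  then have wt: "weight lam al be ws j = lam j * (Y j * Y j) * (al j * fst z + be j * snd z) ^ (2 * m)" for j
    unfolding weight_def by (simp add: mult.assoc)
  have Y_neg: "Y j = 0" if "j < r" "lam j < 0" for j
  proof -
    have "det j j \<in> set (map (det j) Neg)" using that set_Neg by simp
    then have "0 \<in> set (map (det j) Neg)" by (simp add: det_def)
    then show ?thesis unfolding Y_def by (simp add: prod_list_zero_iff)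
  qed
  have Y_pos: "Y j \<noteq> 0" if j: "j < r" "0 < lam j" for j
  proof -
    have "det j k \<noteq> 0" if "k \<in> set Neg" for k
    proof -
      have "k < r" "lam k < 0" using that set_Neg by auto
      with j show ?thesis by (intro det_nz) auto
    qed
    then have "0 \<notin> set (map (det j) Neg)" by auto
    then show ?thesis unfolding Y_def by (simp add: prod_list_zero_iff)
  qed
  have pos: "0 < weight lam al be ws j" if "j < r" "0 < lam j" for j
  proof -
    have Y2: "0 < Y j * Y j" using Y_pos[OF that] not_real_square_gt_zero by blast
    have "0 < (al j * fst z + be j * snd z)\<^sup>2" using z that(1) by simp
    then have "0 < (al j * fst z + be j * snd z) ^ (2 * m)" by (simp add: power_mult)
    with Y2 that(2) show ?thesis by (simp add: wt)
  qed
  have nonneg: "\<forall>j<r. 0 \<le> weight lam al be ws j"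
  proof (intro allI impI)
    fix j assume j: "j < r"
    show "0 \<le> weight lam al be ws j"
    proof (cases "0 < lam j")
      case True
      with pos j show ?thesis by (simp add: less_imp_le)
    next
      case False
      moreover have "lam j \<noteq> 0" using lam j by simp
      ultimately have "lam j < 0" by simp
      with Y_neg j show ?thesis by (simp add: wt)
    qed
  qed
  obtain j1 j2 where j: "j1 < r" "j2 < r" "j1 \<noteq> j2" "0 < lam j1" "0 < lam j2"
    by (rule two_positive_indices[OF lam]) (use few r in linarith)
  then have "al j1 * be j2 - be j1 * al j2 \<noteq> 0"
    by (intro honest_rep_det[OF hon])
  with j show False
    by (intro no_definite_weights[OF s p rep len nonneg j(1,2)] pos)
qed

lemma honest_rep_length_ge_2:
  assumes s: "1 \<le> s" and hon: "honest_rep s p r lam al be"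
    and not_power: "\<forall>\<alpha> \<beta> :: real. p \<noteq> (\<lambda>x y. (\<alpha> * x + \<beta> * y) ^ (2 * s))
                       \<and> p \<noteq> (\<lambda>x y. - ((\<alpha> * x + \<beta> * y) ^ (2 * s)))"
  shows "2 \<le> r"
proof (rule ccontr)
  assume "\<not> 2 \<le> r"
  then consider "r = 0" | "r = 1" by linarith
  then show False
  proof cases
    case 1
    then have "p = (\<lambda>x y. (0 * x + 0 * y) ^ (2 * s))"
      using hon s unfolding honest_rep_def by (auto simp: fun_eq_iff)
    with not_power show False by blast
  next
    case 2
    then have rep: "\<And>x y. p x y = lam 0 * (al 0 * x + be 0 * y) ^ (2 * s)"
      and "lam 0 \<noteq> 0"
      using hon unfolding honest_rep_def by auto
    define q where "q = root (2 * s) \<bar>lam 0\<bar>"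
    have q: "q ^ (2 * s) = \<bar>lam 0\<bar>"
      unfolding q_def using s by (intro real_root_pow_pos2) auto
    have scaled: "(q * al 0 * x + q * be 0 * y) ^ (2 * s) = \<bar>lam 0\<bar> * (al 0 * x + be 0 * y) ^ (2 * s)" for x y
    proof -
      have "(q * al 0 * x + q * be 0 * y) ^ (2 * s) = (q * (al 0 * x + be 0 * y)) ^ (2 * s)"
        by (simp add: algebra_simps)
      then show ?thesis by (simp only: power_mult_distrib q)
    qed
    consider "0 < lam 0" | "lam 0 < 0" using \<open>lam 0 \<noteq> 0\<close> by linarith
    then show False
    proof cases
      case 1
      then have "p = (\<lambda>x y. (q * al 0 * x + q * be 0 * y) ^ (2 * s))"
        by (simp add: fun_eq_iff rep scaled)
      with not_power show False by blast
    next
      case 2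
      then have "p = (\<lambda>x y. - ((q * al 0 * x + q * be 0 * y) ^ (2 * s)))"
        by (simp add: fun_eq_iff rep scaled)
      with not_power show False by blast
    qed
  qed
qed

lemma honest_rep_neg:
  assumes "honest_rep s p r lam al be"
  shows "honest_rep s (\<lambda>x y. - p x y) r (\<lambda>j. - lam j) al be"
  using assms unfolding honest_rep_def by (simp add: sum_negf[symmetric])

lemma lin_prod_neg:
  assumes "lin_prod n F"
  shows "lin_prod n (\<lambda>x y. - F x y)"
proof -
  obtain c u v where "\<And>x y. F x y = c * (\<Prod>i<n. u i * x + v i * y)"
    using assms unfolding lin_prod_def by blast
  then show ?thesis unfolding lin_prod_def by (intro exI[of _ "- c"] exI[of _ u] exI[of _ v]) simp
qed

lemma negatives_ge:
  assumes "1 \<le> s" "lin_prod (2 * s) p" "honest_rep s p r lam al be" "2 \<le> r"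
  shows "s \<le> card {j. j < r \<and> lam j < 0}"
proof (rule ccontr)
  assume few: "\<not> s \<le> card {j. j < r \<and> lam j < 0}"
  show False
  proof (cases "r \<le> s")
    case True
    with assms show False by (rule short_honest_rep_impossible)
  next
    case False
    with assms(1-3) few show False by (intro few_negatives_impossible) auto
  qed
qed

theorem corollary2p6:
  fixes s :: nat and p :: "real \<Rightarrow> real \<Rightarrow> real" and a b :: nat
  assumes "s \<ge> 1"
    and "\<exists>u v :: nat \<Rightarrow> real. \<forall>x y. p x y = (\<Prod>j<2 * s. u j * x + v j * y)"
    and "\<forall>\<alpha> \<beta> :: real. p \<noteq> (\<lambda>x y. (\<alpha> * x + \<beta> * y) ^ (2 * s))
                       \<and> p \<noteq> (\<lambda>x y. - ((\<alpha> * x + \<beta> * y) ^ (2 * s)))"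
    and "(a, b) \<in> badges s p"
  shows "a \<ge> s \<and> b \<ge> s"
proof -
  obtain r lam al be where a: "a = card {j. j < r \<and> lam j > 0}" and b: "b = card {j. j < r \<and> lam j < 0}"
    and hon: "honest_rep s p r lam al be"
    using assms(4) unfolding badges_def by blast
  have lin: "lin_prod (2 * s) p"
    using assms(2) unfolding lin_prod_def by (metis mult_1)
  have r: "2 \<le> r" using honest_rep_length_ge_2[OF assms(1) hon assms(3)] .
  have b_ge: "s \<le> b"
    unfolding b by (rule negatives_ge[OF assms(1) lin hon r])
  have "s \<le> card {j. j < r \<and> - lam j < 0}"
    by (rule negatives_ge[OF assms(1) lin_prod_neg[OF lin] honest_rep_neg[OF hon] r])
  then have a_ge: "s \<le> a"
    unfolding a by simp
  from a_ge b_ge show ?thesis by simp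
qed

end
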